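(* Let $P$ be a weighted combinatorial optimization problem and let $A$ be a deterministic algorithm for $P$ that uses symbolic perturbation. Let $\mathcal{C}$ be any null case of $P$. Then the following three statements hold. (a) If $A(S,w) \in L$ for every instance $(S,w) \notin \mathcal{C}$, then $A(S,w) \in L$ for every instance $(S,w)$ of $P$. (b) Suppose that for each structure $S$, a nonnegative integer $\rho_S(\pi)$ (e.g. running time or memory consumption) is assigned to every root-to-leaf path $\pi$ of $T_S$. Let $\pi(S,w)$ denote the path traversed by $A$ on input $(S,w)$. Let $t : P \to \mathbb{N}$, and suppose $\rho_S(\pi(S,w)) \le t(S)$ for every instance $(S,w) \notin \mathcal{C}$. Then $\rho_S(\pi(S,w)) \le t(S)$ for every instance $(S,w)$. (c) Suppose $A(S,w) \in L$ for every instance $(S,w)$. For each $S=(n,W,L,\mathrm{cost}) \in P$, let $b(S,\cdot) : W \to \mathbb{R}$ be continuous. If $\mathrm{cost}(w, A(S,w)) \le b(S,w)$ for every instance $(S,w) \notin \mathcal{C}$, then this inequality holds for every instance $(S,w)$.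
   Context: Let $Q$ be a subfield of $\mathbb{R}$ (e.g. $\mathbb{R}$, $\mathbb{Q}$, or the real algebraic numbers). Equip $Q^n$ with the Euclidean metric $d$. For $x \in Q^n$ and $\epsilon>0$, the $\epsilon$-neighborhood of $x$ is $\{y \in Q^n \mid d(x,y)<\epsilon\}$. A neighborhood of $x$ is an $\epsilon$-neighborhood of $x$ for some $\epsilon>0$. A set $U \subseteq Q^n$ is open if it contains a neighborhood of each of its points. A set $C \subseteq Q^n$ is nowhere open if it contains no non-empty open subset of $Q^n$. A set $X \subseteq Q^n$ is semi-open if for every $x \in X$ and every neighborhood $N$ of $x$ there is a non-empty open set $U \subseteq Q^n$ with $U \subseteq N \cap X$. For $x \in \mathbb{R}$, $\mathrm{sgn}(x) = x/|x|$ if $x \neq 0$ and $\mathrm{sgn}(0)=0$. Problems: A weighted combinatorial optimization (minimization) problem $P$ is a set of problem structures; each structure $S=(n,W,L,\mathrm{cost})$ consists of a positive integer $n$, a semi-open set $W \subseteq Q^n$ of admissible weight vectors, a finite non-empty set $L$ of feasible solutions, and a function $\mathrm{cost} : W \times L \to \mathbb{R}$ such that $\mathrm{cost}(\cdot,l)$ is continuous on $W$ for every $l \in L$. An instance is a pair $(S,w)$ with $S \in P$ and $w \in W$. A null case of $P$ is a set $\mathcal{C}$ of instances of $P$ such that for every structure $S=(n,W,L,\mathrm{cost}) \in P$ the set $\{w \in W \mid (S,w) \in \mathcal{C}\}$ is nowhere open. Algorithms: A deterministic algorithm $A$ for $P$ assigns to each structure $S=(n,W,L,\mathrm{cost}) \in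 P$ a finite rooted binary decision tree $T_S$. Each leaf is labelled with an element of $L \cup \{l_f\}$, where $l_f \notin L$ is a special symbol representing failure. Each internal node $u$ is labelled with a continuous branching function $v_u : W \to Q$. On input $(S,w)$, $A$ starts at the root of $T_S$. At an internal node $u$ it moves to the left child if $v_u(w)<0$ and to the right child if $v_u(w)>0$. If $v_u(w)=0$ (a tie), it moves to the left or right child according to a deterministic tie-breaking policy, i.e. a rule fixing, for every instance $(S,w)$ and every internal node $u$ with $v_u(w)=0$, which child is taken. $A$ returns the label $A(S,w)$ of the leaf reached. Directions: Let $W \subseteq Q^n$ be semi-open, $w \in W$, and $h : \mathbb{R} \to Q^n$ with $h(0)=0$ and $h$ continuous at $0$. $W$ continues into direction $h$ at $w$ if there is $\delta>0$ such that for every $0<a<\delta$ some neighborhood of $w+h(a)$ is contained in $W$. If $W$ continues into direction $h$ at $w$ and $f : W \to Q$ is continuous, then $f$ is increasing (resp. constant, decreasing) into direction $h$ at $w$ if the following holds: there is $\delta>0$ such that for every $0<a<\delta$ there is a neighborhood $N_a \subseteq W$ of $w+h(a)$ with $\mathrm{sgn}(f(y)-f(w)) = 1$ (resp. $0$, $-1$) for all $y \in N_a$. Symbolic perturbation: $A$ uses symbolic perturbation if, for every instance $(S,w)$ with $S=(n,W,L,\mathrm{cost})$, there exists a function $h_{S,w} : \mathbb{R} \to Q^n$ satisfying all of the following: - $h_{S,w}(0)=0$ and $h_{S,w}$ is continuous at $0$; - $W$ continues into direction $h_{S,w}$ at $w$; - every branching function of $T_S$ is decreasing, constant, or increasing into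 direction $h_{S,w}$ at $w$; - whenever a tie $v_u(w)=0$ occurs at an internal node $u$ on input $(S,w)$, $A$ takes the left child if $v_u$ is decreasing into direction $h_{S,w}$ at $w$, and the right child otherwise. *)

theory Defs
  imports Complex_Main
begin

definition subfield_real :: "real set \<Rightarrow> bool" where
  "subfield_real Q \<longleftrightarrow> 0 \<in> Q \<and> 1 \<in> Q \<and>
     (\<forall>x\<in>Q. \<forall>y\<in>Q. x + y \<in> Q \<and> x * y \<in> Q) \<and>
     (\<forall>x\<in>Q. - x \<in> Q) \<and> (\<forall>x\<in>Q. x \<noteq> 0 \<longrightarrow> inverse x \<in> Q)"

definition Qn :: "real set \<Rightarrow> nat \<Rightarrow> (nat \<Rightarrow> real) set" where
  "Qn Q n = {x. (\<forall>i<n. x i \<in> Q) \<and> (\<forall>i\<ge>n. x i = 0)}"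

definition qdist :: "nat \<Rightarrow> (nat \<Rightarrow> real) \<Rightarrow> (nat \<Rightarrow> real) \<Rightarrow> real" where
  "qdist n x y = sqrt (\<Sum>i<n. (x i - y i)^2)"

definition vzero :: "nat \<Rightarrow> real" where
  "vzero = (\<lambda>i. 0)"

definition vadd :: "(nat \<Rightarrow> real) \<Rightarrow> (nat \<Rightarrow> real) \<Rightarrow> (nat \<Rightarrow> real)" where
  "vadd x y = (\<lambda>i. x i + y i)"

definition nbhd :: "real set \<Rightarrow> nat \<Rightarrow> (nat \<Rightarrow> real) \<Rightarrow> real \<Rightarrow> (nat \<Rightarrow> real) set" where
  "nbhd Q n x \<epsilon> = {y \<in> Qn Q n. qdist n x y < \<epsilon>}"

definition qopen :: "real set \<Rightarrow> nat \<Rightarrow> (nat \<Rightarrow> real) set \<Rightarrow> bool" where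
  "qopen Q n U \<longleftrightarrow> U \<subseteq> Qn Q n \<and> (\<forall>x\<in>U. \<exists>\<epsilon>>0. nbhd Q n x \<epsilon> \<subseteq> U)"

definition nowhere_open :: "real set \<Rightarrow> nat \<Rightarrow> (nat \<Rightarrow> real) set \<Rightarrow> bool" where
  "nowhere_open Q n C \<longleftrightarrow> \<not> (\<exists>U. U \<noteq> {} \<and> qopen Q n U \<and> U \<subseteq> C)"

definition semi_open :: "real set \<Rightarrow> nat \<Rightarrow> (nat \<Rightarrow> real) set \<Rightarrow> bool" where
  "semi_open Q n X \<longleftrightarrow> X \<subseteq> Qn Q n \<and>
     (\<forall>x\<in>X. \<forall>\<epsilon>>0. \<exists>U. U \<noteq> {} \<and> qopen Q n U \<and> U \<subseteq> nbhd Q n x \<epsilon> \<inter> X)"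

definition qcont :: "nat \<Rightarrow> (nat \<Rightarrow> real) set \<Rightarrow> ((nat \<Rightarrow> real) \<Rightarrow> real) \<Rightarrow> bool" where
  "qcont n W f \<longleftrightarrow> (\<forall>x\<in>W. \<forall>e>0. \<exists>d>0. \<forall>y\<in>W. qdist n x y < d \<longrightarrow> \<bar>f y - f x\<bar> < e)"

record 'l wstruct =
  dim :: nat
  wts :: "(nat \<Rightarrow> real) set"
  sols :: "'l set"
  cost :: "(nat \<Rightarrow> real) \<Rightarrow> 'l \<Rightarrow> real"

definition wco_problem :: "real set \<Rightarrow> 'l wstruct set \<Rightarrow> bool" where
  "wco_problem Q P \<longleftrightarrow> (\<forall>S\<in>P. 0 < dim S \<and> semi_open Q (dim S) (wts S) \<and>
     finite (sols S) \<and> sols S \<noteq> {} \<and>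
     (\<forall>l\<in>sols S. qcont (dim S) (wts S) (\<lambda>w. cost S w l)))"

definition null_case :: "real set \<Rightarrow> 'l wstruct set \<Rightarrow> ('l wstruct \<times> (nat \<Rightarrow> real)) set \<Rightarrow> bool" where
  "null_case Q P C \<longleftrightarrow> (\<forall>S\<in>P. nowhere_open Q (dim S) {w \<in> wts S. (S, w) \<in> C})"

text \<open>Leaves carry an element of L (as Some l) or the failure symbol (None). Nodes are addressed by their position,
  the list of directions from the root (False = left, True = right).\<close>

datatype 'l dtree = Leaf "'l option" | Node "(nat \<Rightarrow> real) \<Rightarrow> real" "'l dtree" "'l dtree"

fun leaf_labels :: "'l dtree \<Rightarrow> 'l option set" where
  "leaf_labels (Leaf x) = {x}"
| "leaf_labels (Node v l r) = leaf_labels l \<union> leaf_labels r"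

fun branch_funs :: "'l dtree \<Rightarrow> ((nat \<Rightarrow> real) \<Rightarrow> real) set" where
  "branch_funs (Leaf x) = {}"
| "branch_funs (Node v l r) = insert v (branch_funs l \<union> branch_funs r)"

fun subtree :: "'l dtree \<Rightarrow> bool list \<Rightarrow> 'l dtree" where
  "subtree t [] = t"
| "subtree (Node v l r) (d # ds) = subtree (if d then r else l) ds"
| "subtree (Leaf x) (d # ds) = Leaf x"

fun leaf_label :: "'l dtree \<Rightarrow> 'l option" where
  "leaf_label (Leaf x) = x"
| "leaf_label (Node v l r) = None"

text \<open>Path (list of directions) traversed from the node at position p, using the
  tie-breaking policy tb (tb p = True means: go to the right child on a tie at node p).\<close>
fun run_path :: "'l dtree \<Rightarrow> (bool list \<Rightarrow> bool) \<Rightarrow> (nat \<Rightarrow> real) \<Rightarrow> bool list \<Rightarrow> bool list" where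
  "run_path (Leaf x) tb w p = []"
| "run_path (Node v l r) tb w p =
     (let d = (if v w < 0 then False else if 0 < v w then True else tb p)
      in d # run_path (if d then r else l) tb w (p @ [d]))"

text \<open>An algorithm is given by T (tree per structure) and tb (tie-breaking policy per
  instance and node position).\<close>
definition alg_path :: "('l wstruct \<Rightarrow> 'l dtree) \<Rightarrow> ('l wstruct \<Rightarrow> (nat \<Rightarrow> real) \<Rightarrow> bool list \<Rightarrow> bool)
     \<Rightarrow> 'l wstruct \<Rightarrow> (nat \<Rightarrow> real) \<Rightarrow> bool list" where
  "alg_path T tb S w = run_path (T S) (tb S w) w []"

definition alg_out :: "('l wstruct \<Rightarrow> 'l dtree) \<Rightarrow> ('l wstruct \<Rightarrow> (nat \<Rightarrow> real) \<Rightarrow> bool list \<Rightarrow> bool)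
     \<Rightarrow> 'l wstruct \<Rightarrow> (nat \<Rightarrow> real) \<Rightarrow> 'l option" where
  "alg_out T tb S w = leaf_label (subtree (T S) (alg_path T tb S w))"

definition det_algorithm :: "real set \<Rightarrow> 'l wstruct set \<Rightarrow> ('l wstruct \<Rightarrow> 'l dtree) \<Rightarrow> bool" where
  "det_algorithm Q P T \<longleftrightarrow> (\<forall>S\<in>P. leaf_labels (T S) \<subseteq> insert None (Some ` sols S) \<and>
     (\<forall>v\<in>branch_funs (T S). qcont (dim S) (wts S) v \<and> (\<forall>w\<in>wts S. v w \<in> Q)))"

definition continues_into :: "real set \<Rightarrow> nat \<Rightarrow> (nat \<Rightarrow> real) set \<Rightarrow> (real \<Rightarrow> nat \<Rightarrow> real)
     \<Rightarrow> (nat \<Rightarrow> real) \<Rightarrow> bool" where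
  "continues_into Q n W h w \<longleftrightarrow>
     (\<exists>\<delta>>0. \<forall>a. 0 < a \<and> a < \<delta> \<longrightarrow> (\<exists>\<epsilon>>0. nbhd Q n (vadd w (h a)) \<epsilon> \<subseteq> W))"

definition dir_sign :: "real set \<Rightarrow> nat \<Rightarrow> (nat \<Rightarrow> real) set \<Rightarrow> ((nat \<Rightarrow> real) \<Rightarrow> real)
     \<Rightarrow> (real \<Rightarrow> nat \<Rightarrow> real) \<Rightarrow> (nat \<Rightarrow> real) \<Rightarrow> real \<Rightarrow> bool" where
  "dir_sign Q n W f h w s \<longleftrightarrow> continues_into Q n W h w \<and> qcont n W f \<and>
     (\<exists>\<delta>>0. \<forall>a. 0 < a \<and> a < \<delta> \<longrightarrow>
        (\<exists>\<epsilon>>0. nbhd Q n (vadd w (h a)) \<epsilon> \<subseteq> W \<and>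
           (\<forall>y\<in>nbhd Q n (vadd w (h a)) \<epsilon>. sgn (f y - f w) = s)))"

definition symbolic_perturbation :: "real set \<Rightarrow> 'l wstruct set \<Rightarrow> ('l wstruct \<Rightarrow> 'l dtree)
     \<Rightarrow> ('l wstruct \<Rightarrow> (nat \<Rightarrow> real) \<Rightarrow> bool list \<Rightarrow> bool) \<Rightarrow> bool" where
  "symbolic_perturbation Q P T tb \<longleftrightarrow>
    (\<forall>S\<in>P. \<forall>w\<in>wts S. \<exists>h :: real \<Rightarrow> nat \<Rightarrow> real.
       (\<forall>a. h a \<in> Qn Q (dim S)) \<and> h 0 = vzero \<and>
       (\<forall>e>0. \<exists>d>0. \<forall>a. \<bar>a\<bar> < d \<longrightarrow> qdist (dim S) (h a) (h 0) < e) \<and>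
       continues_into Q (dim S) (wts S) h w \<and>
       (\<forall>v\<in>branch_funs (T S). dir_sign Q (dim S) (wts S) v h w (-1) \<or>
           dir_sign Q (dim S) (wts S) v h w 0 \<or> dir_sign Q (dim S) (wts S) v h w 1) \<and>
       (\<forall>k < length (alg_path T tb S w).
          (case subtree (T S) (take k (alg_path T tb S w)) of
             Leaf x \<Rightarrow> True
           | Node v l r \<Rightarrow> v w = 0 \<longrightarrow>
               tb S w (take k (alg_path T tb S w)) = (\<not> dir_sign Q (dim S) (wts S) v h w (-1)))))"

end

theory Submission
  imports Defs "HOL-Analysis.L2_Norm" "HOL-Library.Sublist"
begin

(* Fix a structure S and an instance w.  Along the perturbation direction h at w,
   every branching function f of the finite tree T S has a sign s f in {-1,0,1}: sgn (f y - f w)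
   = s f on small balls around w + h a for all small a > 0.  Intersecting these finitely many
   conditions gives a ball U in W, arbitrarily close to w, on which all branching functions show
   this sign pattern and nonzero values f w keep their sign.  On U the algorithm follows the same
   path as on w: where f w <> 0 by sign persistence; where f w = 0 the tie rule at w picks the
   side into which f moves along h, and if f is constant on U the tie rule at y agrees with it.
   As a null case is nowhere open, U contains a generic instance.  So every instance is a limit
   of generic instances with the same path, which gives (a) and (b); (c) follows since
   non-strict inequalities between continuous functions pass to limits. *)

lemma qdist_triangle: "qdist n x z \<le> qdist n x y + qdist n y z"
proof -
  have "qdist n x z = L2_set (\<lambda>i. (x i - y i) + (y i - z i)) {..<n}"
    by (simp add: qdist_def L2_set_def)
  also have "\<dots> \<le> L2_set (\<lambda>i. x i - y i) {..<n} + L2_set (\<lambda>i. y i - z i) {..<n}"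
    by (rule L2_set_triangle_ineq)
  finally show ?thesis by (simp add: qdist_def L2_set_def)
qed

lemma qdist_self [simp]: "qdist n x x = 0"
  by (simp add: qdist_def)

lemma qdist_vadd: "qdist n w (vadd w x) = qdist n x vzero"
  by (simp add: qdist_def vadd_def vzero_def power2_commute)

lemma vadd_Qn: "subfield_real Q \<Longrightarrow> x \<in> Qn Q n \<Longrightarrow> y \<in> Qn Q n \<Longrightarrow> vadd x y \<in> Qn Q n"
  unfolding subfield_real_def Qn_def vadd_def by auto

lemma nbhd_centre: "c \<in> Qn Q n \<Longrightarrow> 0 < r \<Longrightarrow> c \<in> nbhd Q n c r"
  by (simp add: nbhd_def)

lemma nbhd_mono: "r \<le> r' \<Longrightarrow> nbhd Q n c r \<subseteq> nbhd Q n c r'"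
  by (auto simp: nbhd_def)

lemma qopen_nbhd: "qopen Q n (nbhd Q n c r)"
  unfolding qopen_def
proof (intro conjI ballI)
  show "nbhd Q n c r \<subseteq> Qn Q n" by (auto simp: nbhd_def)
  fix z assume z: "z \<in> nbhd Q n c r"
  have "nbhd Q n z (r - qdist n c z) \<subseteq> nbhd Q n c r"
  proof
    fix u assume "u \<in> nbhd Q n z (r - qdist n c z)"
    moreover have "qdist n c u \<le> qdist n c z + qdist n z u" by (rule qdist_triangle)
    ultimately show "u \<in> nbhd Q n c r" by (auto simp: nbhd_def)
  qed
  moreover have "0 < r - qdist n c z" using z by (simp add: nbhd_def)
  ultimately show "\<exists>\<epsilon>>0. nbhd Q n z \<epsilon> \<subseteq> nbhd Q n c r" by blast
qed

(* We phrase "for all small a > 0" as eventually at 0+,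
   so that finitely many such conditions combine by eventually_conj / eventually_ball_finite. *)
lemma eventually_at_right_0_downward:
  fixes P :: "real \<Rightarrow> bool"
  assumes "\<exists>r>0. P r" and "\<And>r r'. 0 < r' \<Longrightarrow> r' \<le> r \<Longrightarrow> P r \<Longrightarrow> P r'"
  shows "eventually P (at_right 0)"
  using assms unfolding eventually_at_right_field by (metis less_le_not_le order.strict_iff_not)

lemma eventually_at_right_0_witness:
  fixes P :: "real \<Rightarrow> bool"
  assumes "eventually P (at_right 0)"
  shows "\<exists>r>0. P r"
proof -
  have "eventually (\<lambda>r. 0 < r \<and> P r) (at_right (0::real))"
    using eventually_at_right_less assms by (rule eventually_conj)
  then show ?thesis
    using eventually_happens'[OF trivial_limit_at_right_real] by blast
qed

lemma eventually_nbhd: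
  "\<exists>r>0. \<forall>y\<in>nbhd Q n c r. P y \<Longrightarrow> eventually (\<lambda>r. \<forall>y\<in>nbhd Q n c r. P y) (at_right 0)"
  by (rule eventually_at_right_0_downward) (use nbhd_mono in blast)+

definition perturbation :: "real set \<Rightarrow> nat \<Rightarrow> (real \<Rightarrow> nat \<Rightarrow> real) \<Rightarrow> bool" where
  "perturbation Q n h \<longleftrightarrow> (\<forall>a. h a \<in> Qn Q n) \<and> h 0 = vzero \<and>
     (\<forall>e>0. \<exists>d>0. \<forall>a. \<bar>a\<bar> < d \<longrightarrow> qdist n (h a) (h 0) < e)"

lemma perturbation_small:
  assumes "perturbation Q n h" and "0 < e"
  shows "eventually (\<lambda>a. qdist n (h a) vzero < e) (at_right 0)"
proof -
  obtain d where "0 < d" "\<forall>a. \<bar>a\<bar> < d \<longrightarrow> qdist n (h a) vzero < e"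
    using assms unfolding perturbation_def by metis
  then show ?thesis unfolding eventually_at_right_field by force
qed

lemma continues_into_eventually:
  "continues_into Q n W h w \<Longrightarrow>
     eventually (\<lambda>a. \<exists>\<epsilon>>0. nbhd Q n (vadd w (h a)) \<epsilon> \<subseteq> W) (at_right 0)"
  unfolding continues_into_def eventually_at_right_field by blast

lemma dir_sign_eventually:
  "dir_sign Q n W f h w s \<Longrightarrow>
     eventually (\<lambda>a. \<exists>\<epsilon>>0. \<forall>y\<in>nbhd Q n (vadd w (h a)) \<epsilon>. sgn (f y - f w) = s) (at_right 0)"
  unfolding dir_sign_def eventually_at_right_field by blast

(* A branching function cannot be, e.g., both increasing and constant into the same
   direction: both properties hold at the centre w + h a for some common small a. *)
lemma dir_sign_unique:
  assumes Q: "subfield_real Q" and w: "w \<in> Qn Q n" and h: "perturbation Q n h"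
    and s1: "dir_sign Q n W f h w s1" and s2: "dir_sign Q n W f h w s2"
  shows "s1 = s2"
proof -
  obtain a where
    "\<exists>\<epsilon>>0. \<forall>y\<in>nbhd Q n (vadd w (h a)) \<epsilon>. sgn (f y - f w) = s1"
    "\<exists>\<epsilon>>0. \<forall>y\<in>nbhd Q n (vadd w (h a)) \<epsilon>. sgn (f y - f w) = s2"
    using eventually_at_right_0_witness[OF
        eventually_conj[OF dir_sign_eventually[OF s1] dir_sign_eventually[OF s2]]] by blast
  moreover have "vadd w (h a) \<in> Qn Q n"
    using vadd_Qn[OF Q w] h by (simp add: perturbation_def)
  ultimately show ?thesis using nbhd_centre by metis
qed

(* A function that is constant on a neighbourhood of y is not decreasing into any direction
   at y: the perturbed points y + h a eventually lie in that neighbourhood. *)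
lemma constant_not_decreasing:
  assumes Q: "subfield_real Q" and h: "perturbation Q n h"
    and y: "y \<in> nbhd Q n c r" and const: "\<forall>z\<in>nbhd Q n c r. f z = f y"
  shows "\<not> dir_sign Q n W f h y (-1)"
proof
  assume dec: "dir_sign Q n W f h y (-1)"
  have "0 < r - qdist n c y" using y by (simp add: nbhd_def)
  then obtain a where a: "qdist n (h a) vzero < r - qdist n c y"
      and "\<exists>\<epsilon>>0. \<forall>z\<in>nbhd Q n (vadd y (h a)) \<epsilon>. sgn (f z - f y) = -1"
    using eventually_at_right_0_witness[OF
        eventually_conj[OF perturbation_small[OF h] dir_sign_eventually[OF dec]]] by blast
  moreover have z: "vadd y (h a) \<in> Qn Q n"
    using vadd_Qn[OF Q] y h by (simp add: nbhd_def perturbation_def)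
  ultimately have "sgn (f (vadd y (h a)) - f y) = -1" using nbhd_centre by metis
  moreover have "qdist n c (vadd y (h a)) < r"
    using qdist_triangle[of n c "vadd y (h a)" y] a by (simp add: qdist_vadd)
  then have "f (vadd y (h a)) = f y" using const z by (simp add: nbhd_def)
  ultimately show False by simp
qed

definition step_dir :: "((nat \<Rightarrow> real) \<Rightarrow> real) \<Rightarrow> (nat \<Rightarrow> real) \<Rightarrow> bool \<Rightarrow> bool" where
  "step_dir v w tie = (if v w < 0 then False else if 0 < v w then True else tie)"

lemma run_path_Node:
  "run_path (Node v l r) tb w p =
     (let d = step_dir v w (tb p) in d # run_path (if d then r else l) tb w (p @ [d]))"
  by (simp add: step_dir_def)

lemma finite_branch_funs: "finite (branch_funs t)"
  by (induction t) auto

lemma subtree_Node_branch_funs: "subtree t q = Node v l r \<Longrightarrow> v \<in> branch_funs t"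
  by (induction t q rule: subtree.induct) (auto split: if_splits)

lemma run_path_reaches_leaf: "\<exists>x. subtree t (run_path t tb w p) = Leaf x"
  by (induction t arbitrary: p) (auto simp: Let_def)

lemma prefix_run_path_Node:
  assumes q: "prefix q (run_path t tb w p)" and node: "subtree t q = Node v l r"
  shows "length q < length (run_path t tb w p) \<and> take (length q) (run_path t tb w p) = q"
proof -
  have "q \<noteq> run_path t tb w p" using node run_path_reaches_leaf[of t tb w p] by auto
  then show ?thesis using q by (auto simp: prefix_def less_le)
qed

lemma run_path_agree:
  assumes "\<And>q v l r. prefix q (run_path t tb1 w p) \<Longrightarrow> prefix q (run_path t tb2 y p) \<Longrightarrow>
      subtree t q = Node v l r \<Longrightarrow> step_dir v w (tb1 (p @ q)) = step_dir v y (tb2 (p @ q))"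
  shows "run_path t tb1 w p = run_path t tb2 y p"
  using assms
proof (induction t arbitrary: p)
  case (Leaf x)
  then show ?case by simp
next
  case (Node v l r)
  define d where "d = step_dir v w (tb1 p)"
  have same_dir: "step_dir v y (tb2 p) = d"
    using Node.prems[of "[]"] by (simp add: d_def)
  have path1: "run_path (Node v l r) tb1 w p = d # run_path (if d then r else l) tb1 w (p @ [d])"
    unfolding run_path_Node d_def Let_def ..
  have path2: "run_path (Node v l r) tb2 y p = d # run_path (if d then r else l) tb2 y (p @ [d])"
    unfolding run_path_Node same_dir Let_def ..
  have "step_dir v' w (tb1 ((p @ [d]) @ q)) = step_dir v' y (tb2 ((p @ [d]) @ q))"
    if "prefix q (run_path (if d then r else l) tb1 w (p @ [d]))"
      "prefix q (run_path (if d then r else l) tb2 y (p @ [d]))"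
      "subtree (if d then r else l) q = Node v' l' r'" for q v' l' r'
    using Node.prems[of "d # q"] that unfolding path1 path2 by simp
  then have "run_path (if d then r else l) tb1 w (p @ [d]) = run_path (if d then r else l) tb2 y (p @ [d])"
    using Node.IH by (cases d) auto
  then show ?case unfolding path1 path2 by simp
qed

lemma branch_decision_agrees:
  assumes Q: "subfield_real Q" and w: "w \<in> Qn Q n"
    and h: "perturbation Q n h" and hy: "perturbation Q n hy"
    and y: "y \<in> nbhd Q n c r"
    and pattern: "\<forall>z\<in>nbhd Q n c r. sgn (f z - f w) = s"
    and dir: "dir_sign Q n W f h w s" and s: "s \<in> {-1, 0, 1}"
    and persist: "f w \<noteq> 0 \<Longrightarrow> sgn (f y) = sgn (f w)"
    and tie_w: "f w = 0 \<Longrightarrow> tw = (\<not> dir_sign Q n W f h w (-1))"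
    and tie_y: "f y = 0 \<Longrightarrow> ty = (\<not> dir_sign Q n W f hy y (-1))"
  shows "step_dir f w tw = step_dir f y ty"
proof (cases "f w = 0")
  case False
  then show ?thesis using persist by (auto simp: step_dir_def sgn_real_def split: if_splits)
next
  case True
  have sy: "sgn (f y) = s" using pattern y True by simp
  have unique: "dir_sign Q n W f h w s' \<Longrightarrow> s' = s" for s'
    using dir_sign_unique[OF Q w h _ dir] .
  consider "s = -1" | "s = 0" | "s = 1" using s by blast
  then show ?thesis
  proof cases
    case 1
    then show ?thesis using sy tie_w True dir by (auto simp: step_dir_def sgn_real_def split: if_splits)
  next
    case 2
    then have "\<forall>z\<in>nbhd Q n c r. f z = f y" using pattern sy True by (simp add: sgn_eq_0_iff)
    then have "\<not> dir_sign Q n W f hy y (-1)" using constant_not_decreasing[OF Q hy y] by blast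
    moreover have "\<not> dir_sign Q n W f h w (-1)" using unique 2 by force
    ultimately show ?thesis using sy tie_w tie_y True 2 by (simp add: step_dir_def sgn_eq_0_iff)
  next
    case 3
    then have "\<not> dir_sign Q n W f h w (-1)" using unique by force
    then show ?thesis using sy tie_w True 3 by (auto simp: step_dir_def sgn_real_def split: if_splits)
  qed
qed

lemma symbolic_perturbation_at:
  assumes "symbolic_perturbation Q P T tb" and "S \<in> P" and "w \<in> wts S"
  obtains h where "perturbation Q (dim S) h" and "continues_into Q (dim S) (wts S) h w"
    and "\<forall>f\<in>branch_funs (T S). \<exists>s\<in>{-1, 0, 1}. dir_sign Q (dim S) (wts S) f h w s"
    and "\<And>q f l r. prefix q (alg_path T tb S w) \<Longrightarrow> subtree (T S) q = Node f l r \<Longrightarrow> f w = 0 \<Longrightarrow>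
           tb S w q = (\<not> dir_sign Q (dim S) (wts S) f h w (-1))"
proof -
  obtain h where h0: "(\<forall>a. h a \<in> Qn Q (dim S)) \<and> h 0 = vzero \<and>
         (\<forall>e>0. \<exists>d>0. \<forall>a. \<bar>a\<bar> < d \<longrightarrow> qdist (dim S) (h a) (h 0) < e)"
    and cont: "continues_into Q (dim S) (wts S) h w"
    and dirs0: "\<forall>f\<in>branch_funs (T S). dir_sign Q (dim S) (wts S) f h w (-1) \<or>
           dir_sign Q (dim S) (wts S) f h w 0 \<or> dir_sign Q (dim S) (wts S) f h w 1"
    and ties: "\<forall>k < length (alg_path T tb S w).
          (case subtree (T S) (take k (alg_path T tb S w)) of
             Leaf x \<Rightarrow> True
           | Node f l r \<Rightarrow> f w = 0 \<longrightarrow>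
               tb S w (take k (alg_path T tb S w)) = (\<not> dir_sign Q (dim S) (wts S) f h w (-1)))"
    using assms unfolding symbolic_perturbation_def by blast
  have h: "perturbation Q (dim S) h" using h0 unfolding perturbation_def by blast
  have dirs: "\<forall>f\<in>branch_funs (T S). \<exists>s\<in>{-1, 0, 1}. dir_sign Q (dim S) (wts S) f h w s"
    using dirs0 by blast
  have "tb S w q = (\<not> dir_sign Q (dim S) (wts S) f h w (-1))"
    if "prefix q (alg_path T tb S w)" "subtree (T S) q = Node f l r" "f w = 0" for q f l r
  proof -
    have "length q < length (alg_path T tb S w) \<and> take (length q) (alg_path T tb S w) = q"
      using prefix_run_path_Node that(1,2) unfolding alg_path_def by blast
    then show ?thesis using ties[rule_format, of "length q"] that(2,3) by simp
  qed
  with h cont dirs show thesis by (rule that)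
qed

lemma qcont_sign_eventually:
  assumes f: "qcont n W f" and w: "w \<in> W"
  shows "eventually (\<lambda>d. \<forall>y\<in>W. qdist n w y < d \<longrightarrow> f w \<noteq> 0 \<longrightarrow> sgn (f y) = sgn (f w)) (at_right 0)"
proof (cases "f w = 0")
  case False
  then obtain d where "0 < d" "\<forall>y\<in>W. qdist n w y < d \<longrightarrow> \<bar>f y - f w\<bar> < \<bar>f w\<bar>"
    using f w unfolding qcont_def by (meson zero_less_abs_iff)
  then have "\<exists>d>0. \<forall>y\<in>W. qdist n w y < d \<longrightarrow> f w \<noteq> 0 \<longrightarrow> sgn (f y) = sgn (f w)"
    by (intro exI[of _ d]) (auto simp: sgn_real_def abs_if split: if_splits)
  then show ?thesis by (rule eventually_at_right_0_downward) auto
qed simp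

lemma sign_pattern_region:
  assumes Q: "subfield_real Q" and w: "w \<in> Qn Q n" and h: "perturbation Q n h"
    and cont: "continues_into Q n W h w" and F: "finite F"
    and dirs: "\<forall>f\<in>F. dir_sign Q n W f h w (s f)" and e: "0 < \<epsilon>"
  shows "\<exists>c r. 0 < r \<and> c \<in> Qn Q n \<and> nbhd Q n c r \<subseteq> W \<and>
           (\<forall>y\<in>nbhd Q n c r. qdist n w y < \<epsilon> \<and> (\<forall>f\<in>F. sgn (f y - f w) = s f))"
proof -
  have "\<forall>f\<in>F. eventually (\<lambda>a. \<exists>r>0. \<forall>y\<in>nbhd Q n (vadd w (h a)) r. sgn (f y - f w) = s f)
      (at_right 0)"
    using dirs dir_sign_eventually by blast
  from eventually_ball_finite[OF F this] have ev_signs: "eventually (\<lambda>a. \<forall>f\<in>F.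
      \<exists>r>0. \<forall>y\<in>nbhd Q n (vadd w (h a)) r. sgn (f y - f w) = s f) (at_right 0)" .
  obtain a where a: "qdist n (h a) vzero < \<epsilon> / 2"
      and inW: "\<exists>r>0. \<forall>y\<in>nbhd Q n (vadd w (h a)) r. y \<in> W"
      and signs: "\<forall>f\<in>F. \<exists>r>0. \<forall>y\<in>nbhd Q n (vadd w (h a)) r. sgn (f y - f w) = s f"
    using eventually_at_right_0_witness[OF eventually_conj[OF perturbation_small[OF h half_gt_zero[OF e]]
        eventually_conj[OF continues_into_eventually[OF cont] ev_signs]]]
    by (auto simp: subset_eq)
  define c where "c = vadd w (h a)"
  have c: "c \<in> Qn Q n" using vadd_Qn[OF Q w] h by (simp add: c_def perturbation_def)
  have small: "eventually (\<lambda>r. r < \<epsilon> / 2) (at_right 0)"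
    by (rule eventually_at_rightI[OF _ half_gt_zero[OF e]]) simp
  have "\<forall>f\<in>F. eventually (\<lambda>r. \<forall>y\<in>nbhd Q n c r. sgn (f y - f w) = s f) (at_right 0)"
    using signs eventually_nbhd unfolding c_def by blast
  then have "eventually (\<lambda>r. r < \<epsilon> / 2 \<and> (\<forall>y\<in>nbhd Q n c r. y \<in> W) \<and>
      (\<forall>f\<in>F. \<forall>y\<in>nbhd Q n c r. sgn (f y - f w) = s f)) (at_right 0)"
    using small eventually_nbhd[OF inW[folded c_def]] eventually_ball_finite[OF F]
    by (intro eventually_conj)
  from eventually_at_right_0_witness[OF this] obtain r where r: "0 < r" "r < \<epsilon> / 2"
      and rW: "\<forall>y\<in>nbhd Q n c r. y \<in> W"
      and rsigns: "\<forall>f\<in>F. \<forall>y\<in>nbhd Q n c r. sgn (f y - f w) = s f"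
    by blast
  have "qdist n w y < \<epsilon>" if "y \<in> nbhd Q n c r" for y
    using qdist_triangle[of n w y c] that a r by (simp add: nbhd_def c_def qdist_vadd)
  then show ?thesis using r c rW rsigns by blast
qed

lemma same_path_region:
  assumes Q: "subfield_real Q" and prob: "wco_problem Q P" and alg: "det_algorithm Q P T"
    and sp: "symbolic_perturbation Q P T tb" and S: "S \<in> P" and w: "w \<in> wts S" and e: "0 < \<epsilon>"
  shows "\<exists>c r. 0 < r \<and> c \<in> Qn Q (dim S) \<and> nbhd Q (dim S) c r \<subseteq> wts S \<and>
           (\<forall>y\<in>nbhd Q (dim S) c r. qdist (dim S) w y < \<epsilon> \<and> alg_path T tb S y = alg_path T tb S w)"
proof -
  define n W F where "n = dim S" and "W = wts S" and "F = branch_funs (T S)"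
  have wQ: "w \<in> Qn Q n" using prob S w by (auto simp: wco_problem_def semi_open_def n_def)
  have contF: "\<forall>f\<in>F. qcont n W f" using alg S by (simp add: det_algorithm_def n_def W_def F_def)
  obtain h where h: "perturbation Q n h" and cont: "continues_into Q n W h w"
    and dirs: "\<forall>f\<in>F. \<exists>s\<in>{-1, 0, 1}. dir_sign Q n W f h w s"
    and tie_w: "\<And>q f l r. prefix q (alg_path T tb S w) \<Longrightarrow> subtree (T S) q = Node f l r \<Longrightarrow>
                  f w = 0 \<Longrightarrow> tb S w q = (\<not> dir_sign Q n W f h w (-1))"
    using symbolic_perturbation_at[OF sp S w] unfolding n_def W_def F_def by metis
  obtain s where s: "\<forall>f\<in>F. s f \<in> {-1, 0, 1} \<and> dir_sign Q n W f h w (s f)"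
    using dirs by metis
  (* shrink the radius so that every nonzero branching value keeps its sign *)
  have "\<forall>f\<in>F. eventually (\<lambda>d. \<forall>y\<in>W. qdist n w y < d \<longrightarrow> f w \<noteq> 0 \<longrightarrow>
      sgn (f y) = sgn (f w)) (at_right 0)"
    using contF w qcont_sign_eventually unfolding W_def by blast
  then have "eventually (\<lambda>d. d < \<epsilon> \<and> (\<forall>f\<in>F. \<forall>y\<in>W. qdist n w y < d \<longrightarrow> f w \<noteq> 0 \<longrightarrow>
      sgn (f y) = sgn (f w))) (at_right 0)"
    using eventually_at_rightI[OF _ e] eventually_ball_finite[OF finite_branch_funs[of "T S"]]
    unfolding F_def by (intro eventually_conj) auto
  from eventually_at_right_0_witness[OF this] obtain \<epsilon>' where e': "0 < \<epsilon>'" "\<epsilon>' < \<epsilon>"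
    and persist: "\<forall>f\<in>F. \<forall>y\<in>W. qdist n w y < \<epsilon>' \<longrightarrow> f w \<noteq> 0 \<longrightarrow> sgn (f y) = sgn (f w)"
    by blast
  obtain c r where r: "0 < r" and c: "c \<in> Qn Q n" and cW: "nbhd Q n c r \<subseteq> W"
    and close: "\<forall>y\<in>nbhd Q n c r. qdist n w y < \<epsilon>'"
    and pattern: "\<forall>y\<in>nbhd Q n c r. \<forall>f\<in>F. sgn (f y - f w) = s f"
    using sign_pattern_region[OF Q wQ h cont _ _ e'(1), of F s] s
    unfolding F_def by (auto simp: finite_branch_funs)
  have "alg_path T tb S y = alg_path T tb S w" if y: "y \<in> nbhd Q n c r" for y
  proof -
    have yW: "y \<in> W" using y cW by blast
    obtain hy where hy: "perturbation Q n hy"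
      and tie_y: "\<And>q f l r. prefix q (alg_path T tb S y) \<Longrightarrow> subtree (T S) q = Node f l r \<Longrightarrow>
                    f y = 0 \<Longrightarrow> tb S y q = (\<not> dir_sign Q n W f hy y (-1))"
      using symbolic_perturbation_at[OF sp S yW[unfolded W_def]] unfolding n_def W_def by metis
    have "run_path (T S) (tb S y) y [] = run_path (T S) (tb S w) w []"
    proof (rule run_path_agree)
      fix q f l r'
      assume qy: "prefix q (run_path (T S) (tb S y) y [])"
        and qw: "prefix q (run_path (T S) (tb S w) w [])" and node: "subtree (T S) q = Node f l r'"
      have f: "f \<in> F" using node subtree_Node_branch_funs unfolding F_def by blast
      show "step_dir f y (tb S y ([] @ q)) = step_dir f w (tb S w ([] @ q))"
        using branch_decision_agrees[OF Q wQ h hy y, of f "s f" W "tb S w q" "tb S y q"]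
          pattern y f s persist close yW tie_w[OF _ node] tie_y[OF _ node] qy qw
        unfolding alg_path_def by auto
    qed
    then show ?thesis unfolding alg_path_def .
  qed
  then show ?thesis using r c cW close e' unfolding n_def W_def by force
qed

(* Since a null case is nowhere open, that ball contains an instance outside the null case. *)
lemma generic_instance_same_path:
  assumes Q: "subfield_real Q" and prob: "wco_problem Q P" and alg: "det_algorithm Q P T"
    and sp: "symbolic_perturbation Q P T tb" and null: "null_case Q P C"
    and S: "S \<in> P" and w: "w \<in> wts S" and e: "0 < \<epsilon>"
  shows "\<exists>y\<in>wts S. (S, y) \<notin> C \<and> qdist (dim S) w y < \<epsilon> \<and> alg_path T tb S y = alg_path T tb S w"
proof -
  obtain c r where r: "0 < r" and c: "c \<in> Qn Q (dim S)" and cW: "nbhd Q (dim S) c r \<subseteq> wts S"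
    and same: "\<forall>y\<in>nbhd Q (dim S) c r. qdist (dim S) w y < \<epsilon> \<and> alg_path T tb S y = alg_path T tb S w"
    using same_path_region[OF Q prob alg sp S w e] by blast
  have "nbhd Q (dim S) c r \<noteq> {}" using nbhd_centre[OF c r] by blast
  then have "\<not> nbhd Q (dim S) c r \<subseteq> {y \<in> wts S. (S, y) \<in> C}"
    using null S qopen_nbhd unfolding null_case_def nowhere_open_def by blast
  then show ?thesis using cW same by blast
qed

lemma le_from_dense:
  assumes f: "qcont n W f" and g: "qcont n W g" and w: "w \<in> W"
    and dense: "\<forall>\<epsilon>>0. \<exists>y\<in>W. qdist n w y < \<epsilon> \<and> f y \<le> g y"
  shows "f w \<le> g w"
proof (rule ccontr)
  assume "\<not> f w \<le> g w"
  then have gap: "0 < (f w - g w) / 2" by simp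
  obtain d1 where "0 < d1" and d1: "\<forall>y\<in>W. qdist n w y < d1 \<longrightarrow> \<bar>f y - f w\<bar> < (f w - g w) / 2"
    using f w gap unfolding qcont_def by blast
  obtain d2 where "0 < d2" and d2: "\<forall>y\<in>W. qdist n w y < d2 \<longrightarrow> \<bar>g y - g w\<bar> < (f w - g w) / 2"
    using g w gap unfolding qcont_def by blast
  obtain y where y: "y \<in> W" "qdist n w y < min d1 d2" and le: "f y \<le> g y"
    using dense \<open>0 < d1\<close> \<open>0 < d2\<close> by (metis min_less_iff_conj)
  have "\<bar>f y - f w\<bar> < (f w - g w) / 2" and "\<bar>g y - g w\<bar> < (f w - g w) / 2"
    using d1 d2 y by auto
  then show False using le unfolding abs_less_iff by argo
qed

lemma path_property_extends:
  assumes Q: "subfield_real Q" and prob: "wco_problem Q P" and alg: "det_algorithm Q P T"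
    and sp: "symbolic_perturbation Q P T tb" and null: "null_case Q P C"
    and generic: "\<forall>S\<in>P. \<forall>w\<in>wts S. (S, w) \<notin> C \<longrightarrow> \<Phi> S (alg_path T tb S w)"
    and S: "S \<in> P" and w: "w \<in> wts S"
  shows "\<Phi> S (alg_path T tb S w)"
  using generic_instance_same_path[OF Q prob alg sp null S w zero_less_one] generic S by metis

lemma cost_bound_extends:
  assumes Q: "subfield_real Q" and prob: "wco_problem Q P" and alg: "det_algorithm Q P T"
    and sp: "symbolic_perturbation Q P T tb" and null: "null_case Q P C"
    and sols: "\<forall>S\<in>P. \<forall>w\<in>wts S. alg_out T tb S w \<in> Some ` sols S"
    and b: "\<forall>S\<in>P. qcont (dim S) (wts S) (b S)"
    and bound: "\<forall>S\<in>P. \<forall>w\<in>wts S. (S, w) \<notin> C \<longrightarrow> cost S w (the (alg_out T tb S w)) \<le> b S w"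
    and S: "S \<in> P" and w: "w \<in> wts S"
  shows "cost S w (the (alg_out T tb S w)) \<le> b S w"
proof (rule le_from_dense[where f = "\<lambda>y. cost S y (the (alg_out T tb S w))"])
  show "qcont (dim S) (wts S) (\<lambda>y. cost S y (the (alg_out T tb S w)))"
    using prob sols S w unfolding wco_problem_def by force
  (* a nearby generic instance with the same path returns the same solution *)
  show "\<forall>\<epsilon>>0. \<exists>y\<in>wts S. qdist (dim S) w y < \<epsilon> \<and> cost S y (the (alg_out T tb S w)) \<le> b S y"
    using generic_instance_same_path[OF Q prob alg sp null S w] bound S
    unfolding alg_out_def by metis
qed (use b S w in auto)

theorem theorem2:
  fixes Q :: "real set" and P :: "'l wstruct set"
    and T :: "'l wstruct \<Rightarrow> 'l dtree"
    and tb :: "'l wstruct \<Rightarrow> (nat \<Rightarrow> real) \<Rightarrow> bool list \<Rightarrow> bool"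
    and C :: "('l wstruct \<times> (nat \<Rightarrow> real)) set"
  assumes "subfield_real Q"
    and "wco_problem Q P"
    and "det_algorithm Q P T"
    and "symbolic_perturbation Q P T tb"
    and "null_case Q P C"
  shows
   "((\<forall>S\<in>P. \<forall>w\<in>wts S. (S, w) \<notin> C \<longrightarrow> alg_out T tb S w \<in> Some ` sols S) \<longrightarrow>
       (\<forall>S\<in>P. \<forall>w\<in>wts S. alg_out T tb S w \<in> Some ` sols S))
    \<and> (\<forall>(\<rho> :: 'l wstruct \<Rightarrow> bool list \<Rightarrow> nat) (t :: 'l wstruct \<Rightarrow> nat).
        (\<forall>S\<in>P. \<forall>w\<in>wts S. (S, w) \<notin> C \<longrightarrow> \<rho> S (alg_path T tb S w) \<le> t S) \<longrightarrow>
        (\<forall>S\<in>P. \<forall>w\<in>wts S. \<rho> S (alg_path T tb S w) \<le> t S))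
    \<and> (\<forall>b :: 'l wstruct \<Rightarrow> (nat \<Rightarrow> real) \<Rightarrow> real.
        (\<forall>S\<in>P. \<forall>w\<in>wts S. alg_out T tb S w \<in> Some ` sols S) \<longrightarrow>
        (\<forall>S\<in>P. qcont (dim S) (wts S) (b S)) \<longrightarrow>
        (\<forall>S\<in>P. \<forall>w\<in>wts S. (S, w) \<notin> C \<longrightarrow> cost S w (the (alg_out T tb S w)) \<le> b S w) \<longrightarrow>
        (\<forall>S\<in>P. \<forall>w\<in>wts S. cost S w (the (alg_out T tb S w)) \<le> b S w))"
proof (intro conjI allI impI ballI)
  fix S w
  assume "\<forall>S\<in>P. \<forall>w\<in>wts S. (S, w) \<notin> C \<longrightarrow> alg_out T tb S w \<in> Some ` sols S"
    and "S \<in> P" and "w \<in> wts S"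
  then show "alg_out T tb S w \<in> Some ` sols S"
    using path_property_extends[OF assms, where \<Phi> = "\<lambda>S p. leaf_label (subtree (T S) p) \<in> Some ` sols S"]
    unfolding alg_out_def by blast
next
  fix \<rho> :: "'l wstruct \<Rightarrow> bool list \<Rightarrow> nat" and t :: "'l wstruct \<Rightarrow> nat" and S w
  assume "\<forall>S\<in>P. \<forall>w\<in>wts S. (S, w) \<notin> C \<longrightarrow> \<rho> S (alg_path T tb S w) \<le> t S"
    and "S \<in> P" and "w \<in> wts S"
  then show "\<rho> S (alg_path T tb S w) \<le> t S"
    using path_property_extends[OF assms, where \<Phi> = "\<lambda>S p. \<rho> S p \<le> t S"] by blast
qed (use cost_bound_extends[OF assms] in blast)

end
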